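(* Let $m \geq 2$, let $X_1, \dots, X_m, Y, Z$ be arbitrary sets, let $\Delta \subseteq X_1 \times \cdots \times X_m \times Y$, and let $f_1, \dots, f_m : \Delta \to Z$ be functions. Suppose $\Gamma \subseteq \Delta$ is a nonempty subset such that, on $\Gamma$, each function $f_i$ ($1 \leq i \leq m$) does not depend on $x_j \in X_j$ for all $1 \leq j \leq m$, $j \neq i$. Then there exists a subset $\bar\Gamma$ with $\Gamma \subseteq \bar\Gamma \subseteq \Delta$ such that, on $\bar\Gamma$, each $f_i$ ($1 \leq i \leq m$) does not depend on $x_j \in X_j$ for all $1 \leq j \leq m$, $j \neq i$, and $\bar\Gamma$ is maximal with respect to inclusion among subsets of $\Delta$ containing $\Gamma$ that have this property.
   Context: For a subset $\Gamma \subseteq \Delta \subseteq X_1 \times \cdots \times X_m \times Y$ and functions $f_1,\dots,f_m:\Delta \to Z$, one says that "on $\Gamma$, each $f_i$ ($1\le i\le m$) does not depend on $x_j \in X_j$ for $1 \le j \le m$, $j \ne i$" if and only if there exist functions $g_i : pr_{X_i \times Y}(\Gamma) \to Z$, $1 \leq i \leq m$, such that $f_i|_\Gamma = g_i \circ pr_{X_i \times Y}|_\Gamma$ for every $1 \leq i \leq m$. Here $pr_{X_i \times Y} : X_1 \times \cdots \times X_m \times Y \to X_i \times Y$ denotes the projection $(x_1, \dots, x_m, y) \mapsto (x_i, y)$. *)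

theory Defs
  imports "HOL-Library.FuncSet"
begin

text \<open>Points of X_1 x ... x X_m x Y are pairs (x, y) with x :: nat => 'a an
  m-tuple indexed by {1..m} (extensional, i.e. x \<in> PiE {1..m} X) and y :: 'b.\<close>

definition pr_XY :: "nat \<Rightarrow> (nat \<Rightarrow> 'a) \<times> 'b \<Rightarrow> 'a \<times> 'b" where
  "pr_XY i p = (fst p i, snd p)"

text \<open>On Gamma, each f_i (1 <= i <= m) does not depend on x_j for j /= i:
  there are g_i : pr_{X_i x Y}(Gamma) -> Z with f_i = g_i o pr_{X_i x Y} on Gamma.\<close>

definition indep_on ::
  "nat \<Rightarrow> 'z set \<Rightarrow> (nat \<Rightarrow> (nat \<Rightarrow> 'a) \<times> 'b \<Rightarrow> 'z) \<Rightarrow> ((nat \<Rightarrow> 'a) \<times> 'b) set \<Rightarrow> bool" where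
  "indep_on m Z f \<Gamma> \<longleftrightarrow>
     (\<exists>g. \<forall>i\<in>{1..m}. g i \<in> pr_XY i ` \<Gamma> \<rightarrow> Z \<and> (\<forall>p\<in>\<Gamma>. f i p = g i (pr_XY i p)))"

end

theory Submission
  imports Defs
begin

text \<open>Independence on a set only says that two points of the set with the same projection to
  \<open>X\<^sub>i \<times> Y\<close> take the same value under \<open>f\<^sub>i\<close>. This pairwise condition passes to unions of chains,
  so Zorn's lemma yields a maximal independent set between \<open>\<Gamma>\<close> and \<open>\<Delta>\<close>.\<close>

definition agree_on_fibres ::
  "nat \<Rightarrow> (nat \<Rightarrow> (nat \<Rightarrow> 'a) \<times> 'b \<Rightarrow> 'z) \<Rightarrow> (nat \<Rightarrow> 'a) \<times> 'b \<Rightarrow> (nat \<Rightarrow> 'a) \<times> 'b \<Rightarrow> bool" where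
  "agree_on_fibres m f p q \<longleftrightarrow> (\<forall>i\<in>{1..m}. pr_XY i p = pr_XY i q \<longrightarrow> f i p = f i q)"

lemma indep_on_iff_pairwise_agree_on_fibres:
  assumes "\<forall>i\<in>{1..m}. f i ` S \<subseteq> Z"
  shows "indep_on m Z f S \<longleftrightarrow> pairwise (agree_on_fibres m f) S"
proof
  assume "indep_on m Z f S"
  then show "pairwise (agree_on_fibres m f) S"
    unfolding indep_on_def pairwise_def agree_on_fibres_def by metis
next
  assume agree: "pairwise (agree_on_fibres m f) S"
  define g where "g i u = f i (SOME p. p \<in> S \<and> pr_XY i p = u)" for i u
  have factor: "f i p = g i (pr_XY i p)" if i: "i \<in> {1..m}" and p: "p \<in> S" for i p
  proof -
    let ?q = "SOME q. q \<in> S \<and> pr_XY i q = pr_XY i p"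
    have q: "?q \<in> S \<and> pr_XY i ?q = pr_XY i p"
      by (rule someI[of _ p]) (simp add: p)
    have "agree_on_fibres m f ?q p"
      using agree q p by (cases "?q = p") (auto simp: pairwise_def agree_on_fibres_def)
    then show ?thesis
      using i q by (simp add: agree_on_fibres_def g_def)
  qed
  have "g i \<in> pr_XY i ` S \<rightarrow> Z" if i: "i \<in> {1..m}" for i
  proof
    fix u assume "u \<in> pr_XY i ` S"
    then obtain p where p: "p \<in> S" and "u = pr_XY i p" by blast
    then have "g i u = f i p"
      using factor[OF i p] by simp
    then show "g i u \<in> Z"
      using assms i p by blast
  qed
  with factor show "indep_on m Z f S"
    unfolding indep_on_def by (intro exI[of _ g]) blast
qed

lemma indep_on_Union_chain:
  assumes "chain\<^sub>\<subseteq> C" and "\<forall>S\<in>C. indep_on m Z f S" and "\<forall>i\<in>{1..m}. f i ` \<Union>C \<subseteq> Z"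
  shows "indep_on m Z f (\<Union>C)"
proof -
  have "pairwise (agree_on_fibres m f) S" if "S \<in> C" for S
    using that assms(2,3) indep_on_iff_pairwise_agree_on_fibres[of m f S Z] by blast
  then have "pairwise (agree_on_fibres m f) (\<Union>C)"
    using assms(1) by (rule pairwise_chain_Union)
  then show ?thesis
    using assms(3) by (simp add: indep_on_iff_pairwise_agree_on_fibres)
qed

theorem mainTheorem1:
  fixes m :: nat
    and X :: "nat \<Rightarrow> 'a set" and Y :: "'b set" and Z :: "'z set"
    and \<Delta> \<Gamma> :: "((nat \<Rightarrow> 'a) \<times> 'b) set"
    and f :: "nat \<Rightarrow> (nat \<Rightarrow> 'a) \<times> 'b \<Rightarrow> 'z"
  assumes "m \<ge> 2"
    and "\<Delta> \<subseteq> (PiE {1..m} X) \<times> Y"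
    and "\<forall>i\<in>{1..m}. f i \<in> \<Delta> \<rightarrow> Z"
    and "\<Gamma> \<subseteq> \<Delta>" and "\<Gamma> \<noteq> {}"
    and "indep_on m Z f \<Gamma>"
  shows "\<exists>\<Gamma>'. \<Gamma> \<subseteq> \<Gamma>' \<and> \<Gamma>' \<subseteq> \<Delta> \<and> indep_on m Z f \<Gamma>' \<and>
           (\<forall>\<Gamma>''. \<Gamma> \<subseteq> \<Gamma>'' \<and> \<Gamma>'' \<subseteq> \<Delta> \<and> indep_on m Z f \<Gamma>'' \<and> \<Gamma>' \<subseteq> \<Gamma>'' \<longrightarrow> \<Gamma>'' = \<Gamma>')"
proof -
  define A where "A = {S. \<Gamma> \<subseteq> S \<and> S \<subseteq> \<Delta> \<and> indep_on m Z f S}"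
  have "\<exists>M\<in>A. \<forall>S\<in>A. M \<subseteq> S \<longrightarrow> S = M"
  proof (rule subset_Zorn_nonempty)
    show "A \<noteq> {}"
      using assms(4,6) unfolding A_def by blast
  next
    fix C assume "C \<noteq> {}" and "subset.chain A C"
    then have "C \<subseteq> A" and "chain\<^sub>\<subseteq> C"
      by (auto simp: subset.chain_def chain_subset_def)
    then have "\<Gamma> \<subseteq> \<Union>C" and "\<Union>C \<subseteq> \<Delta>"
      using \<open>C \<noteq> {}\<close> by (auto simp: A_def)
    moreover have "indep_on m Z f (\<Union>C)"
    proof (rule indep_on_Union_chain)
      show "chain\<^sub>\<subseteq> C" by fact
      show "\<forall>S\<in>C. indep_on m Z f S"
        using \<open>C \<subseteq> A\<close> by (auto simp: A_def)
      show "\<forall>i\<in>{1..m}. f i ` \<Union>C \<subseteq> Z"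
        using \<open>\<Union>C \<subseteq> \<Delta>\<close> assms(3) by blast
    qed
    ultimately show "\<Union>C \<in> A"
      unfolding A_def by blast
  qed
  then obtain M where "M \<in> A" and maximal: "\<forall>S\<in>A. M \<subseteq> S \<longrightarrow> S = M"
    by blast
  from \<open>M \<in> A\<close> have "\<Gamma> \<subseteq> M" and "M \<subseteq> \<Delta>" and "indep_on m Z f M"
    by (simp_all add: A_def)
  moreover have "\<forall>\<Gamma>''. \<Gamma> \<subseteq> \<Gamma>'' \<and> \<Gamma>'' \<subseteq> \<Delta> \<and> indep_on m Z f \<Gamma>'' \<and> M \<subseteq> \<Gamma>'' \<longrightarrow> \<Gamma>'' = M"
    using maximal by (simp add: A_def)
  ultimately show ?thesis
    by blast
qed

end
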